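(* Let $I=[-\tfrac12,\tfrac12]$ and $\Sigma=I\times I$ with the sup distance. Let $F:\Sigma\to\Sigma$ be a Borel map of the form $F(x,y)=(T(x),G(x,y))$, let $\mu$ be an $F$-invariant Borel probability measure on $\Sigma$, and let $\mu_x=(\pi_x)_*\mu$ be its marginal on the $x$-axis (which is $T$-invariant), where $\pi_x(x,y)=x$. Suppose: (1) there are constants $C>0,\lambda>0$ such that for every $g\in L^1(I)$, every $f:I\to\mathbb{R}$ of bounded variation and every $n\ge 0$, $$\Big|\int g(T^n(x))f(x)\,dm-\int g\,d\mu_x\int f\,dm\Big|\le C\,\|g\|_{L^1}\,\|f\|_{BV}\,e^{-\lambda n},$$ where $m$ is Lebesgue measure on $I$; moreover $T^{-1}(x)$ is finite for every $x\in I$; (2) there is $\lambda_0<1$ such that $|G(x,y_1)-G(x,y_2)|\le\lambda_0|y_1-y_2|$ for all $x,y_1,y_2$; (3) there is a constant $K$ such that for every $\ell$-Lipschitz function $f:\Sigma\to\mathbb{R}$ the measure $(\pi_x)_*(f\mu)$ has a density $\overline f$ of bounded variation with $\operatorname{var}(\overline f)\le K\ell$. Then $(F,\mu)$ has exponential decay of correlations with respect to Lipschitz observables: there are constants $C'>0$, $\rho>0$ such that for all Lipschitz $g:\Sigma\to\mathbb{R}$, all Lipschitz $f:\Sigma\to\mathbb{R}$ with $f\ge 0$, and all $n\ge0$, $$\Big|\int g\circ F^n\, f\,d\mu-\int f\,d\mu\int g\,d\mu\Big|\le C'\,L(g)\,\|f\|_{lip}\,e^{-\rho n}.$$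
   Context: $L(g)=\sup_{p\ne q}|g(p)-g(q)|/d(p,q)$ is the best Lipschitz constant, $\|f\|_{lip}=\|f\|_\infty+L(f)$. $f\mu$ denotes the measure with density $f$ with respect to $\mu$. $\|f\|_{BV}$ is the bounded-variation norm ($\sup|f|$ plus total variation). The paper states the conclusion as "exponential decay of correlations with respect to Lipschitz and $L^1$ observables"; the displayed inequality is the precise form of this decay. *)

theory Defs
  imports "HOL-Analysis.Analysis" "HOL-Probability.Probability"
begin

definition Iv :: "real set" where
  "Iv = {-1/2 .. 1/2}"

definition Sq :: "(real \<times> real) set" where
  "Sq = Iv \<times> Iv"

definition dsup :: "real \<times> real \<Rightarrow> real \<times> real \<Rightarrow> real" where
  "dsup p q = max \<bar>fst p - fst q\<bar> \<bar>snd p - snd q\<bar>"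

definition is_lip_with :: "real \<Rightarrow> (real \<times> real \<Rightarrow> real) \<Rightarrow> bool" where
  "is_lip_with l f \<longleftrightarrow> (\<forall>p\<in>Sq. \<forall>q\<in>Sq. \<bar>f p - f q\<bar> \<le> l * dsup p q)"

definition is_lip :: "(real \<times> real \<Rightarrow> real) \<Rightarrow> bool" where
  "is_lip f \<longleftrightarrow> (\<exists>l. is_lip_with l f)"

definition lipconst :: "(real \<times> real \<Rightarrow> real) \<Rightarrow> real" where
  "lipconst g = (SUP pq \<in> {(p, q). p \<in> Sq \<and> q \<in> Sq \<and> p \<noteq> q}.
                   \<bar>g (fst pq) - g (snd pq)\<bar> / dsup (fst pq) (snd pq))"

definition lipnorm :: "(real \<times> real \<Rightarrow> real) \<Rightarrow> real" where
  "lipnorm f = (SUP p \<in> Sq. \<bar>f p\<bar>) + lipconst f"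

definition var_sums :: "(real \<Rightarrow> real) \<Rightarrow> real set" where
  "var_sums f = {(\<Sum>i<length xs - 1. \<bar>f (xs ! Suc i) - f (xs ! i)\<bar>) | xs.
                   sorted xs \<and> set xs \<subseteq> Iv}"

definition is_BV :: "(real \<Rightarrow> real) \<Rightarrow> bool" where
  "is_BV f \<longleftrightarrow> bdd_above (var_sums f)"

definition totvar :: "(real \<Rightarrow> real) \<Rightarrow> real" where
  "totvar f = Sup (var_sums f)"

definition BVnorm :: "(real \<Rightarrow> real) \<Rightarrow> real" where
  "BVnorm f = (SUP x \<in> Iv. \<bar>f x\<bar>) + totvar f"

definition mI :: "real measure" where
  "mI = restrict_space lborel Iv"

end

theory Submission
  imports Defs
begin

(* Split n = k + m.  Because F contracts the vertical fibres {x} \<times> I at rate \<lambda>\<^sub>0, the observable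
   g \<circ> F^k is within L(g) \<lambda>\<^sub>0^k of the function h(x) = g(F^k(x, 0)) of the base point alone.
   Hence \<integral> g \<circ> F^(k+m) \<cdot> f d\<mu> is close to \<integral> h(T^m x) fb(x) dm, where fb is the BV density of the
   x-marginal of f\<mu>, and the decay of correlations of T against BV densities makes this
   e^(-\<lambda>m)-close to \<integral> h d\<mu>\<^sub>x \<cdot> \<integral> f d\<mu>.  Finally invariance of \<mu> gives \<integral> g d\<mu> = \<integral> g \<circ> F^k d\<mu>, which
   is again within L(g) \<lambda>\<^sub>0^k of \<integral> h d\<mu>\<^sub>x.  Choosing k \<approx> m \<approx> n/2 gives exponential decay. *)

lemma dsup_le_dist: "dsup p q \<le> dist p q"
proof (cases p; cases q)
  fix a b c d assume [simp]: "p = (a, b)" "q = (c, d)"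
  have "\<bar>a - c\<bar> \<le> sqrt ((dist a c)\<^sup>2 + (dist b d)\<^sup>2)" "\<bar>b - d\<bar> \<le> sqrt ((dist a c)\<^sup>2 + (dist b d)\<^sup>2)"
    by (simp_all add: dist_real_def real_le_rsqrt)
  then show ?thesis by (simp add: dsup_def dist_Pair_Pair)
qed

lemma dsup_le_1: "p \<in> Sq \<Longrightarrow> q \<in> Sq \<Longrightarrow> dsup p q \<le> 1"
  by (cases p; cases q) (auto simp: dsup_def Sq_def Iv_def)

lemma is_lip_with_nonneg:
  assumes "is_lip_with l f"
  shows "0 \<le> l"
proof -
  have "(0, 0) \<in> Sq" "(1/2, 0) \<in> Sq" by (auto simp: Sq_def Iv_def)
  then have "\<bar>f (0, 0) - f (1/2, 0)\<bar> \<le> l * (1/2)"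
    using assms by (force simp: is_lip_with_def dsup_def)
  then show ?thesis by linarith
qed

lemma is_lip_with_continuous_on: "is_lip_with l f \<Longrightarrow> continuous_on Sq f"
proof -
  assume lip: "is_lip_with l f"
  have "l-lipschitz_on Sq f"
  proof (rule lipschitz_onI)
    fix p q assume "p \<in> Sq" "q \<in> Sq"
    then have "\<bar>f p - f q\<bar> \<le> l * dsup p q" using lip by (auto simp: is_lip_with_def)
    also have "\<dots> \<le> l * dist p q" by (simp add: dsup_le_dist is_lip_with_nonneg[OF lip] mult_left_mono)
    finally show "dist (f p) (f q) \<le> l * dist p q" by (simp add: dist_real_def)
  qed (rule is_lip_with_nonneg[OF lip])
  then show ?thesis by (rule lipschitz_on_continuous_on)
qed

lemma is_lip_with_borel_measurable: "is_lip_with l f \<Longrightarrow> f \<in> borel_measurable (restrict_space borel Sq)"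
  by (rule borel_measurable_continuous_on_restrict) (rule is_lip_with_continuous_on)

lemma is_lip_with_lipconst:
  assumes "is_lip g"
  shows "is_lip_with (lipconst g) g"
  unfolding is_lip_with_def
proof (intro ballI)
  obtain l where l: "is_lip_with l g" using assms by (auto simp: is_lip_def)
  let ?P = "{(p, q). p \<in> Sq \<and> q \<in> Sq \<and> p \<noteq> q}"
  let ?r = "\<lambda>pq. \<bar>g (fst pq) - g (snd pq)\<bar> / dsup (fst pq) (snd pq)"
  have dsup_pos: "0 < dsup p q" if "p \<noteq> q" for p q :: "real \<times> real"
    using that by (cases p; cases q) (auto simp: dsup_def)
  have bdd: "bdd_above (?r ` ?P)"
  proof (rule bdd_aboveI2)
    fix pq assume "pq \<in> ?P"
    then obtain p q where pq: "pq = (p, q)" "p \<in> Sq" "q \<in> Sq" "p \<noteq> q" by auto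
    then have "\<bar>g p - g q\<bar> \<le> l * dsup p q" using l by (auto simp: is_lip_with_def)
    then show "?r pq \<le> l" using dsup_pos[OF pq(4)] pq by (simp add: divide_le_eq)
  qed
  fix p q assume pq: "p \<in> Sq" "q \<in> Sq"
  show "\<bar>g p - g q\<bar> \<le> lipconst g * dsup p q"
  proof (cases "p = q")
    case False
    then have "?r (p, q) \<le> lipconst g"
      unfolding lipconst_def using pq by (intro cSUP_upper[OF _ bdd]) auto
    then show ?thesis using dsup_pos[OF False] by (simp add: divide_le_eq)
  qed (simp add: dsup_def)
qed

lemma is_lip_with_abs_diff_le:
  assumes "is_lip_with l f" "p \<in> Sq" "q \<in> Sq"
  shows "\<bar>f p - f q\<bar> \<le> l"
proof -
  have "\<bar>f p - f q\<bar> \<le> l * dsup p q" using assms by (auto simp: is_lip_with_def)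
  also have "\<dots> \<le> l" using dsup_le_1[OF assms(2,3)] is_lip_with_nonneg[OF assms(1)] by (simp add: mult_left_le)
  finally show ?thesis .
qed

lemma is_lip_with_abs_le_SUP:
  assumes "is_lip_with l f" "p \<in> Sq"
  shows "\<bar>f p\<bar> \<le> (SUP q\<in>Sq. \<bar>f q\<bar>)"
proof (rule cSUP_upper[OF assms(2)], rule bdd_aboveI2)
  fix q assume "q \<in> Sq"
  moreover have "(0, 0) \<in> Sq" by (simp add: Sq_def Iv_def)
  ultimately have "\<bar>f q - f (0, 0)\<bar> \<le> l" by (rule is_lip_with_abs_diff_le[OF assms(1)])
  then show "\<bar>f q\<bar> \<le> \<bar>f (0, 0)\<bar> + l" by linarith
qed

lemma abs_diff_le_totvar:
  assumes "is_BV f" "x \<in> Iv" "y \<in> Iv"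
  shows "\<bar>f x - f y\<bar> \<le> totvar f"
proof -
  have "\<bar>f (max x y) - f (min x y)\<bar> \<in> var_sums f"
    unfolding var_sums_def using assms(2,3)
    by (intro CollectI exI[of _ "[min x y, max x y]"]) (auto simp: min_def max_def)
  then have "\<bar>f (max x y) - f (min x y)\<bar> \<le> totvar f"
    unfolding totvar_def using assms(1) by (simp add: is_BV_def cSup_upper)
  then show ?thesis by (auto simp: min_def max_def split: if_splits)
qed

lemma sets_mI: "sets mI = sets (restrict_space borel Iv)"
  by (simp add: mI_def sets_restrict_space)

lemma space_mI: "space mI = Iv"
  by (simp add: mI_def space_restrict_space)

lemma prob_space_mI: "prob_space mI"
  unfolding mI_def by (rule prob_space_restrict_space) (auto simp: Iv_def)

lemma BVnorm_le:
  assumes bv: "is_BV f" and int: "integrable mI f"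
  shows "BVnorm f \<le> \<bar>\<integral>x. f x \<partial>mI\<bar> + 2 * totvar f"
proof -
  interpret mI: prob_space mI by (rule prob_space_mI)
  have "\<bar>f x0\<bar> \<le> \<bar>\<integral>x. f x \<partial>mI\<bar> + totvar f" if x0: "x0 \<in> Iv" for x0
  proof -
    have osc: "f x0 - totvar f \<le> f x \<and> f x \<le> f x0 + totvar f" if "x \<in> space mI" for x
      using abs_diff_le_totvar[OF bv _ x0, of x] that by (simp add: space_mI abs_le_iff)
    have "(\<integral>x. f x0 - totvar f \<partial>mI) \<le> (\<integral>x. f x \<partial>mI)"
      by (rule integral_mono) (use int osc in auto)
    moreover have "(\<integral>x. f x \<partial>mI) \<le> (\<integral>x. f x0 + totvar f \<partial>mI)"
      by (rule integral_mono) (use int osc in auto)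
    ultimately show ?thesis by (auto simp: mI.prob_space)
  qed
  then have "(SUP x\<in>Iv. \<bar>f x\<bar>) \<le> \<bar>\<integral>x. f x \<partial>mI\<bar> + totvar f"
    by (intro cSUP_least) (auto simp: Iv_def)
  then show ?thesis by (simp add: BVnorm_def)
qed

lemma (in prob_space) abs_integral_diff_le:
  fixes f g :: "'a \<Rightarrow> real"
  assumes "integrable M f" "integrable M g" "\<And>x. x \<in> space M \<Longrightarrow> \<bar>f x - g x\<bar> \<le> e"
  shows "\<bar>(\<integral>x. f x \<partial>M) - (\<integral>x. g x \<partial>M)\<bar> \<le> e"
proof -
  have "\<bar>(\<integral>x. f x \<partial>M) - (\<integral>x. g x \<partial>M)\<bar> = \<bar>\<integral>x. f x - g x \<partial>M\<bar>"
    using assms by simp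
  also have "\<dots> \<le> (\<integral>x. \<bar>f x - g x\<bar> \<partial>M)" by (rule integral_abs_bound)
  also have "\<dots> \<le> (\<integral>x. e \<partial>M)" using assms by (intro integral_mono) auto
  finally show ?thesis by (simp add: prob_space)
qed

lemma power_half_le_exp:
  fixes c \<rho> :: real
  assumes c: "0 < c" "c < 1" and \<rho>: "\<rho> \<le> - ln c / 2"
  shows "c ^ (n div 2) \<le> exp (- \<rho> * real n) / c"
proof -
  have "ln c < 0" using c by simp
  have "real n - 1 \<le> 2 * real (n div 2)" by linarith
  then have "real (n div 2) * ln c \<le> ((real n - 1) / 2) * ln c"
    using \<open>ln c < 0\<close> by (intro mult_right_mono_neg) auto
  also have "\<dots> \<le> - \<rho> * real n - ln c"
    using mult_left_mono[OF \<rho>, of "real n"] \<open>ln c < 0\<close> by (simp add: field_simps)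
  finally have "exp (real (n div 2) * ln c) \<le> exp (- \<rho> * real n - ln c)" by simp
  then show ?thesis using c by (simp add: exp_of_nat_mult exp_diff)
qed

lemma two_scale_exp_bound:
  fixes c lam C K L S l \<rho> :: real
  assumes c: "0 < c" "c < 1" and nonneg: "0 \<le> C" "0 \<le> K" "0 \<le> L" "0 \<le> S" "0 \<le> l"
    and \<rho>: "0 \<le> \<rho>" "\<rho> \<le> lam / 2" "\<rho> \<le> - ln c / 2"
  shows "2 * L * c ^ (n div 2) * S + C * L * (S + 2 * K * l) * exp (- lam * real (n - n div 2))
         \<le> (2 / c + C * (1 + 2 * K)) * L * (S + l) * exp (- \<rho> * real n)"
proof -
  define E where "E = exp (- \<rho> * real n)"
  have "real n / 2 \<le> real (n - n div 2)" by linarith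
  then have "\<rho> * real n \<le> lam * real (n - n div 2)"
    using \<rho> mult_left_mono[of "real n / 2" "real (n - n div 2)" lam] mult_right_mono[of \<rho> "lam / 2" "real n"]
    by simp
  then have decay_m: "exp (- lam * real (n - n div 2)) \<le> E" by (simp add: E_def)
  have "0 \<le> E" by (simp add: E_def)
  have "2 * L * c ^ (n div 2) * S \<le> 2 * L * (E / c) * S"
    using power_half_le_exp[OF c \<rho>(3)] nonneg by (intro mult_right_mono mult_left_mono) (auto simp: E_def)
  also have "\<dots> \<le> 2 / c * L * (S + l) * E"
    using nonneg c \<open>0 \<le> E\<close> by (simp add: field_simps mult_left_mono mult_right_mono)
  finally have first: "2 * L * c ^ (n div 2) * S \<le> 2 / c * L * (S + l) * E" .
  have "S + 2 * K * l \<le> (1 + 2 * K) * (S + l)"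
    using nonneg by (simp add: algebra_simps)
  then have "C * L * (S + 2 * K * l) * exp (- lam * real (n - n div 2)) \<le> C * L * ((1 + 2 * K) * (S + l)) * E"
    using decay_m nonneg \<open>0 \<le> E\<close> by (intro mult_mono mult_left_mono) auto
  with first show ?thesis by (simp add: E_def algebra_simps)
qed

locale skew_product =
  fixes F :: "real \<times> real \<Rightarrow> real \<times> real" and T :: "real \<Rightarrow> real"
    and G :: "real \<Rightarrow> real \<Rightarrow> real" and \<mu> :: "(real \<times> real) measure"
  assumes sets_\<mu>: "sets \<mu> = sets (restrict_space borel Sq)"
    and prob_space_\<mu>: "prob_space \<mu>"
    and F_measurable: "F \<in> measurable \<mu> \<mu>"
    and distr_F: "distr \<mu> \<mu> F = \<mu>"
    and F_eq: "\<forall>x\<in>Iv. \<forall>y\<in>Iv. F (x, y) = (T x, G x y)"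
begin

definition correlation :: "(real \<times> real \<Rightarrow> real) \<Rightarrow> (real \<times> real \<Rightarrow> real) \<Rightarrow> nat \<Rightarrow> real" where
  "correlation g f n = (\<integral>p. g ((F ^^ n) p) * f p \<partial>\<mu>) - (\<integral>p. f p \<partial>\<mu>) * (\<integral>p. g p \<partial>\<mu>)"

definition fibre_lipschitz :: "real \<Rightarrow> bool" where
  "fibre_lipschitz c \<longleftrightarrow> (\<forall>x\<in>Iv. \<forall>y1\<in>Iv. \<forall>y2\<in>Iv. \<bar>G x y1 - G x y2\<bar> \<le> c * \<bar>y1 - y2\<bar>)"

definition base_decay :: "real \<Rightarrow> real \<Rightarrow> bool" where
  "base_decay C lam \<longleftrightarrow> (\<forall>g f n. integrable mI g \<longrightarrow> is_BV f \<longrightarrow>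
              \<bar>(\<integral>x. g ((T ^^ n) x) * f x \<partial>mI)
                 - (\<integral>x. g x \<partial>(distr \<mu> (restrict_space borel Iv) fst)) * (\<integral>x. f x \<partial>mI)\<bar>
              \<le> C * (\<integral>x. \<bar>g x\<bar> \<partial>mI) * BVnorm f * exp (- lam * real n))"

definition marginal_BV_bound :: "real \<Rightarrow> bool" where
  "marginal_BV_bound K \<longleftrightarrow> (\<forall>l f. is_lip_with l f \<longrightarrow>
              (\<exists>fb. is_BV fb \<and> totvar fb \<le> K * l \<and> integrable mI fb \<and>
                 (\<forall>A \<in> sets (restrict_space borel Iv).
                    (\<integral>p. indicator (fst -` A) p * f p \<partial>\<mu>) = (\<integral>x. indicator A x * fb x \<partial>mI))))"

lemma fibre_lipschitz_mono: "fibre_lipschitz c \<Longrightarrow> c \<le> c' \<Longrightarrow> fibre_lipschitz c'"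
  unfolding fibre_lipschitz_def by (meson abs_ge_zero mult_right_mono order_trans)

lemma marginal_BV_bound_mono: "marginal_BV_bound K \<Longrightarrow> K \<le> K' \<Longrightarrow> marginal_BV_bound K'"
  unfolding marginal_BV_bound_def by (meson is_lip_with_nonneg mult_right_mono order_trans)

lemma space_\<mu>: "space \<mu> = Sq"
  using sets_eq_imp_space_eq[OF sets_\<mu>] by (simp add: space_restrict_space)

lemma measurable_\<mu>_iff: "measurable \<mu> N = measurable (restrict_space borel Sq) N"
  by (rule measurable_cong_sets[OF sets_\<mu> refl])

lemma is_lip_with_borel_measurable_\<mu>: "is_lip_with l f \<Longrightarrow> f \<in> borel_measurable \<mu>"
  unfolding measurable_\<mu>_iff by (rule is_lip_with_borel_measurable)

lemma integrable_bounded: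
  fixes h :: "real \<times> real \<Rightarrow> real"
  assumes "h \<in> borel_measurable \<mu>" "\<forall>p\<in>Sq. \<bar>h p\<bar> \<le> B"
  shows "integrable \<mu> h"
proof -
  interpret prob_space \<mu> by (rule prob_space_\<mu>)
  show ?thesis by (rule integrable_const_bound[where B = B]) (use assms space_\<mu> in auto)
qed

lemma funpow_F_in_Sq: "p \<in> Sq \<Longrightarrow> (F ^^ k) p \<in> Sq"
  using measurable_space[OF F_measurable] space_\<mu> by (induction k) auto

lemma fst_funpow_F: "p \<in> Sq \<Longrightarrow> fst ((F ^^ k) p) = (T ^^ k) (fst p)"
proof (induction k)
  case (Suc k)
  obtain x y where xy: "(F ^^ k) p = (x, y)" by fastforce
  with funpow_F_in_Sq[OF Suc.prems, of k] have "F (x, y) = (T x, G x y)"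
    using F_eq by (simp add: Sq_def)
  then show ?case using Suc xy by simp
qed simp

lemma funpow_T_in_Iv: "x \<in> Iv \<Longrightarrow> (T ^^ k) x \<in> Iv"
  using fst_funpow_F[of "(x, 0)" k] funpow_F_in_Sq[of "(x, 0)" k]
  by (auto simp: Sq_def Iv_def mem_Times_iff)

lemma funpow_F_measurable: "F ^^ k \<in> measurable \<mu> \<mu>"
  by (induction k) (auto intro: measurable_comp[OF _ F_measurable, unfolded comp_def])

lemma distr_funpow_F: "distr \<mu> \<mu> (F ^^ k) = \<mu>"
proof (induction k)
  case (Suc k)
  have "distr \<mu> \<mu> (F ^^ Suc k) = distr (distr \<mu> \<mu> (F ^^ k)) \<mu> F"
    by (simp add: distr_distr[OF F_measurable funpow_F_measurable] comp_def)
  then show ?case using Suc distr_F by (simp add: comp_def)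
qed (simp add: distr_id2)

lemma integral_funpow_F:
  fixes h :: "real \<times> real \<Rightarrow> real"
  shows "h \<in> borel_measurable \<mu> \<Longrightarrow> (\<integral>p. h ((F ^^ k) p) \<partial>\<mu>) = (\<integral>p. h p \<partial>\<mu>)"
  using integral_distr[OF funpow_F_measurable, of h k] distr_funpow_F[of k] by simp

lemma fst_measurable: "fst \<in> measurable \<mu> (restrict_space borel Iv)"
  unfolding measurable_\<mu>_iff
  by (intro measurable_restrict_space2 measurable_restrict_space1 borel_measurable_continuous_onI
      continuous_intros) (auto simp: space_restrict_space Sq_def)

lemma Pair_0_measurable: "(\<lambda>x. (x, 0::real)) \<in> measurable (restrict_space borel Iv) \<mu>"
  unfolding measurable_cong_sets[OF refl sets_\<mu>]
  by (intro measurable_restrict_space2 measurable_restrict_space1 borel_measurable_continuous_onI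
      continuous_intros) (auto simp: space_restrict_space Sq_def Iv_def)

lemma comp_funpow_T_measurable:
  assumes "h \<in> measurable (restrict_space borel Iv) N"
  shows "(\<lambda>x. h ((T ^^ m) x)) \<in> measurable (restrict_space borel Iv) N"
proof (rule measurable_cong[THEN iffD1])
  show "(\<lambda>x. h (fst ((F ^^ m) (x, 0)))) \<in> measurable (restrict_space borel Iv) N"
    using Pair_0_measurable funpow_F_measurable fst_measurable assms by measurable
  show "h (fst ((F ^^ m) (x, 0))) = h ((T ^^ m) x)" if "x \<in> space (restrict_space borel Iv)" for x
    using that fst_funpow_F[of "(x, 0)" m] by (simp add: space_restrict_space Sq_def Iv_def)
qed

lemma correlation_add_const:
  assumes "integrable \<mu> f" "integrable \<mu> g" "integrable \<mu> (\<lambda>p. g ((F ^^ n) p) * f p)"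
  shows "correlation (\<lambda>p. g p + a) f n = correlation g f n"
proof -
  interpret prob_space \<mu> by (rule prob_space_\<mu>)
  have "(\<integral>p. (g ((F ^^ n) p) + a) * f p \<partial>\<mu>) = (\<integral>p. g ((F ^^ n) p) * f p \<partial>\<mu>) + a * (\<integral>p. f p \<partial>\<mu>)"
    using assms by (simp add: distrib_right)
  moreover have "(\<integral>p. g p + a \<partial>\<mu>) = (\<integral>p. g p \<partial>\<mu>) + a"
    using assms by (simp add: prob_space)
  ultimately show ?thesis by (simp add: correlation_def algebra_simps)
qed

lemma marginal_density_nonneg_AE:
  fixes f :: "real \<times> real \<Rightarrow> real" and fb :: "real \<Rightarrow> real"
  assumes f_nonneg: "\<forall>p\<in>Sq. 0 \<le> f p" and fb: "integrable mI fb"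
    and marginal: "\<forall>A \<in> sets (restrict_space borel Iv).
        (\<integral>p. indicator (fst -` A) p * f p \<partial>\<mu>) = (\<integral>x. indicator A x * fb x \<partial>mI)"
  shows "AE x in mI. 0 \<le> fb x"
proof -
  define A where "A = {x \<in> space mI. fb x < 0}"
  have A: "A \<in> sets mI" using fb unfolding A_def by measurable
  have "0 \<le> (\<integral>p. indicator (fst -` A) p * f p \<partial>\<mu>)"
    using f_nonneg space_\<mu> by (intro integral_nonneg_AE AE_I2) auto
  also have "\<dots> = (\<integral>x. indicator A x * fb x \<partial>mI)" using marginal A sets_mI by simp
  finally have "(\<integral>x. - (indicator A x * fb x) \<partial>mI) = 0"
    by (intro antisym integral_nonneg_AE AE_I2) (auto simp: A_def indicator_def)
  then have "AE x in mI. - (indicator A x * fb x) = 0"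
    using integrable_real_mult_indicator[OF A fb]
    by (subst (asm) integral_nonneg_eq_0_iff_AE) (auto simp: A_def indicator_def mult.commute)
  then show ?thesis
    by (rule AE_mp) (auto simp: A_def indicator_def space_mI split: if_splits)
qed

lemma distr_density_fst:
  fixes f :: "real \<times> real \<Rightarrow> real" and fb :: "real \<Rightarrow> real"
  assumes f: "integrable \<mu> f" "\<forall>p\<in>Sq. 0 \<le> f p" and fb: "integrable mI fb"
    and marginal: "\<forall>A \<in> sets (restrict_space borel Iv).
        (\<integral>p. indicator (fst -` A) p * f p \<partial>\<mu>) = (\<integral>x. indicator A x * fb x \<partial>mI)"
  shows "distr (density \<mu> f) (restrict_space borel Iv) fst = density mI fb"
proof (rule measure_eqI)
  show "sets (distr (density \<mu> f) (restrict_space borel Iv) fst) = sets (density mI fb)"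
    by (simp add: sets_mI)
  have fb_nonneg: "AE x in mI. 0 \<le> fb x"
    by (rule marginal_density_nonneg_AE[OF f(2) fb marginal])
  have fst_density: "fst \<in> measurable (density \<mu> f) (restrict_space borel Iv)"
    using fst_measurable by simp
  fix B assume "B \<in> sets (distr (density \<mu> f) (restrict_space borel Iv) fst)"
  then have B: "B \<in> sets (restrict_space borel Iv)" by simp
  then have B_mI: "B \<in> sets mI" by (simp add: sets_mI)
  have preimage: "fst -` B \<inter> space \<mu> \<in> sets \<mu>" by (rule measurable_sets[OF fst_measurable B])
  have "emeasure (distr (density \<mu> f) (restrict_space borel Iv) fst) B
      = (\<integral>\<^sup>+ p. ennreal (f p) * indicator (fst -` B \<inter> space \<mu>) p \<partial>\<mu>)"
    using f(1) preimage by (simp add: emeasure_distr[OF fst_density B] emeasure_density)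
  also have "\<dots> = (\<integral>\<^sup>+ p. ennreal (indicator (fst -` B \<inter> space \<mu>) p * f p) \<partial>\<mu>)"
    by (intro nn_integral_cong) (auto simp: indicator_def)
  also have "\<dots> = ennreal (\<integral>p. indicator (fst -` B \<inter> space \<mu>) p * f p \<partial>\<mu>)"
    using integrable_real_mult_indicator[OF preimage f(1)] f(2) space_\<mu>
    by (intro nn_integral_eq_integral) (auto simp: mult.commute)
  also have "(\<integral>p. indicator (fst -` B \<inter> space \<mu>) p * f p \<partial>\<mu>) = (\<integral>p. indicator (fst -` B) p * f p \<partial>\<mu>)"
    by (intro Bochner_Integration.integral_cong) (auto simp: indicator_def)
  also have "\<dots> = (\<integral>x. indicator B x * fb x \<partial>mI)" using marginal B by simp
  also have "ennreal \<dots> = (\<integral>\<^sup>+ x. ennreal (indicator B x * fb x) \<partial>mI)"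
    using integrable_real_mult_indicator[OF B_mI fb] fb_nonneg
    by (intro nn_integral_eq_integral[symmetric]) (auto simp: mult.commute)
  also have "\<dots> = (\<integral>\<^sup>+ x. ennreal (fb x) * indicator B x \<partial>mI)"
    by (intro nn_integral_cong) (auto simp: indicator_def)
  also have "\<dots> = emeasure (density mI fb) B"
    using fb B_mI by (simp add: emeasure_density)
  finally show "emeasure (distr (density \<mu> f) (restrict_space borel Iv) fst) B = emeasure (density mI fb) B" .
qed

lemma integral_comp_fst_density:
  fixes f :: "real \<times> real \<Rightarrow> real" and fb H :: "real \<Rightarrow> real"
  assumes f: "integrable \<mu> f" "\<forall>p\<in>Sq. 0 \<le> f p" and fb: "integrable mI fb"
    and marginal: "\<forall>A \<in> sets (restrict_space borel Iv).
        (\<integral>p. indicator (fst -` A) p * f p \<partial>\<mu>) = (\<integral>x. indicator A x * fb x \<partial>mI)"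
    and H: "H \<in> borel_measurable (restrict_space borel Iv)"
  shows "(\<integral>p. H (fst p) * f p \<partial>\<mu>) = (\<integral>x. H x * fb x \<partial>mI)"
proof -
  have fb_nonneg: "AE x in mI. 0 \<le> fb x"
    by (rule marginal_density_nonneg_AE[OF f(2) fb marginal])
  have "(\<integral>p. H (fst p) * f p \<partial>\<mu>) = (\<integral>p. H (fst p) \<partial>density \<mu> f)"
    using f H measurable_comp[OF fst_measurable H] space_\<mu>
    by (subst integral_density) (auto simp: comp_def mult.commute)
  also have "\<dots> = (\<integral>x. H x \<partial>distr (density \<mu> f) (restrict_space borel Iv) fst)"
    using fst_measurable H by (simp add: integral_distr)
  also have "\<dots> = (\<integral>x. H x * fb x \<partial>mI)"
    unfolding distr_density_fst[OF f fb marginal]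
    using H fb fb_nonneg measurable_cong_sets[OF sets_mI refl]
    by (subst integral_density) (auto simp: mult.commute)
  finally show ?thesis .
qed

end

locale skew_product_decay = skew_product +
  fixes c C lam K :: real
  assumes c_pos: "0 < c" and c_less_1: "c < 1" and C_pos: "0 < C" and lam_pos: "0 < lam"
    and K_nonneg: "0 \<le> K"
    and G_lipschitz: "fibre_lipschitz c" and decay: "base_decay C lam" and marginal: "marginal_BV_bound K"
begin

lemma fibre_contraction:
  "p \<in> Sq \<Longrightarrow> q \<in> Sq \<Longrightarrow> fst p = fst q \<Longrightarrow>
     \<bar>snd ((F ^^ k) p) - snd ((F ^^ k) q)\<bar> \<le> c ^ k * \<bar>snd p - snd q\<bar>"
proof (induction k)
  case (Suc k)
  obtain x y where xy: "(F ^^ k) p = (x, y)" by fastforce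
  obtain x' y' where xy': "(F ^^ k) q = (x', y')" by fastforce
  have in_Sq: "(x, y) \<in> Sq" "(x', y') \<in> Sq"
    using funpow_F_in_Sq[OF Suc.prems(1), of k] funpow_F_in_Sq[OF Suc.prems(2), of k] xy xy' by auto
  have "x = x'"
    using fst_funpow_F[OF Suc.prems(1), of k] fst_funpow_F[OF Suc.prems(2), of k] Suc.prems(3) xy xy' by simp
  then have "\<bar>snd ((F ^^ Suc k) p) - snd ((F ^^ Suc k) q)\<bar> = \<bar>G x y - G x y'\<bar>"
    using F_eq in_Sq xy xy' by (auto simp: Sq_def)
  also have "\<dots> \<le> c * \<bar>y - y'\<bar>" using G_lipschitz in_Sq \<open>x = x'\<close> by (auto simp: Sq_def fibre_lipschitz_def)
  also have "\<dots> \<le> c * (c ^ k * \<bar>snd p - snd q\<bar>)"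
    using Suc xy xy' c_pos by (simp add: mult_left_mono)
  finally show ?case by (simp add: mult.assoc)
qed simp

lemma dsup_funpow_F_base_point:
  assumes "p \<in> Sq"
  shows "dsup ((F ^^ k) p) ((F ^^ k) (fst p, 0)) \<le> c ^ k"
proof -
  have base: "(fst p, 0) \<in> Sq" using assms by (auto simp: Sq_def Iv_def)
  have "\<bar>snd ((F ^^ k) p) - snd ((F ^^ k) (fst p, 0))\<bar> \<le> c ^ k * \<bar>snd p\<bar>"
    using fibre_contraction[OF assms base] by simp
  also have "\<dots> \<le> c ^ k" using assms c_pos by (intro mult_left_le) (auto simp: Sq_def Iv_def mem_Times_iff)
  finally show ?thesis
    using fst_funpow_F[OF assms] fst_funpow_F[OF base] by (simp add: dsup_def)
qed

lemma decay_fst_observable: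
  fixes h :: "real \<Rightarrow> real" and f :: "real \<times> real \<Rightarrow> real"
  assumes h: "h \<in> borel_measurable (restrict_space borel Iv)" "\<forall>x\<in>Iv. \<bar>h x\<bar> \<le> L"
    and f: "is_lip_with l f" "\<forall>p\<in>Sq. 0 \<le> f p" "\<forall>p\<in>Sq. \<bar>f p\<bar> \<le> S"
  shows "\<bar>(\<integral>p. h ((T ^^ m) (fst p)) * f p \<partial>\<mu>) - (\<integral>p. h (fst p) \<partial>\<mu>) * (\<integral>p. f p \<partial>\<mu>)\<bar>
           \<le> C * L * (S + 2 * K * l) * exp (- lam * real m)"
proof -
  interpret prob_space \<mu> by (rule prob_space_\<mu>)
  interpret mI: prob_space mI by (rule prob_space_mI)
  obtain fb where fb: "is_BV fb" "totvar fb \<le> K * l" "integrable mI fb"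
    and marginal: "\<forall>A \<in> sets (restrict_space borel Iv).
          (\<integral>p. indicator (fst -` A) p * f p \<partial>\<mu>) = (\<integral>x. indicator A x * fb x \<partial>mI)"
    using marginal f(1) unfolding marginal_BV_bound_def by blast
  have f_int: "integrable \<mu> f"
    using integrable_bounded is_lip_with_borel_measurable_\<mu>[OF f(1)] f(3) by blast
  have hT: "(\<lambda>x. h ((T ^^ m) x)) \<in> borel_measurable (restrict_space borel Iv)"
    by (rule comp_funpow_T_measurable[OF h(1)])
  have h_mI: "integrable mI h"
    using h measurable_cong_sets[OF sets_mI refl]
    by (intro mI.integrable_const_bound[where B = L]) (auto simp: space_mI)
  have int_f: "(\<integral>p. f p \<partial>\<mu>) = (\<integral>x. fb x \<partial>mI)"
    using integral_comp_fst_density[OF f_int f(2) fb(3) marginal, of "\<lambda>_. 1"] by simp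
  have "0 \<le> (\<integral>p. f p \<partial>\<mu>)" "(\<integral>p. f p \<partial>\<mu>) \<le> S"
    using f(2) space_\<mu> abs_integral_diff_le[OF f_int integrable_zero, of S] f(3)
    by (auto intro!: integral_nonneg_AE)
  then have BV: "BVnorm fb \<le> S + 2 * K * l"
    using BVnorm_le[OF fb(1,3)] int_f fb(2) by simp
  have L1: "(\<integral>x. \<bar>h x\<bar> \<partial>mI) \<le> L"
    using mI.abs_integral_diff_le[OF integrable_abs[OF h_mI] integrable_zero, of L] h(2)
    by (simp add: space_mI)
  have "0 \<le> S + 2 * K * l"
    using \<open>0 \<le> (\<integral>p. f p \<partial>\<mu>)\<close> \<open>(\<integral>p. f p \<partial>\<mu>) \<le> S\<close> K_nonneg is_lip_with_nonneg[OF f(1)] by simp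
  moreover have "(\<integral>x. \<bar>h x\<bar> \<partial>mI) * BVnorm fb \<le> (\<integral>x. \<bar>h x\<bar> \<partial>mI) * (S + 2 * K * l)"
    using BV by (intro mult_left_mono) auto
  ultimately have "(\<integral>x. \<bar>h x\<bar> \<partial>mI) * BVnorm fb \<le> L * (S + 2 * K * l)"
    using L1 by (meson mult_right_mono order_trans)
  then have "\<bar>(\<integral>x. h ((T ^^ m) x) * fb x \<partial>mI) - (\<integral>p. h (fst p) \<partial>\<mu>) * (\<integral>x. fb x \<partial>mI)\<bar>
      \<le> C * L * (S + 2 * K * l) * exp (- lam * real m)"
    using decay[unfolded base_decay_def, rule_format, OF h_mI fb(1), of m] C_pos integral_distr[OF fst_measurable h(1)]
    by (auto simp: mult.assoc intro: order_trans)
  then show ?thesis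
    using integral_comp_fst_density[OF f_int f(2) fb(3) marginal hT] int_f by simp
qed

lemma base_point_approx:
  assumes g: "is_lip_with L g" and p: "p \<in> Sq"
  shows "\<bar>g ((F ^^ k) p) - g ((F ^^ k) (fst p, 0))\<bar> \<le> L * c ^ k"
proof -
  have "(fst p, 0) \<in> Sq" using p by (auto simp: Sq_def Iv_def)
  then have "\<bar>g ((F ^^ k) p) - g ((F ^^ k) (fst p, 0))\<bar> \<le> L * dsup ((F ^^ k) p) ((F ^^ k) (fst p, 0))"
    using g funpow_F_in_Sq p by (auto simp: is_lip_with_def)
  also have "\<dots> \<le> L * c ^ k"
    using dsup_funpow_F_base_point[OF p] is_lip_with_nonneg[OF g] by (rule mult_left_mono)
  finally show ?thesis .
qed

lemma base_point_observable:
  assumes g: "is_lip_with L g" "\<forall>p\<in>Sq. \<bar>g p\<bar> \<le> L"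
  shows "(\<lambda>x. g ((F ^^ k) (x, 0))) \<in> borel_measurable (restrict_space borel Iv)"
    and "\<forall>x\<in>Iv. \<bar>g ((F ^^ k) (x, 0))\<bar> \<le> L"
proof -
  show "(\<lambda>x. g ((F ^^ k) (x, 0))) \<in> borel_measurable (restrict_space borel Iv)"
    using Pair_0_measurable funpow_F_measurable is_lip_with_borel_measurable_\<mu>[OF g(1)] by measurable
  have "(x, 0) \<in> Sq" if "x \<in> Iv" for x using that by (simp add: Sq_def Iv_def)
  then show "\<forall>x\<in>Iv. \<bar>g ((F ^^ k) (x, 0))\<bar> \<le> L" using g(2) funpow_F_in_Sq by simp
qed

lemma integral_base_point_approx:
  assumes g: "is_lip_with L g" "\<forall>p\<in>Sq. \<bar>g p\<bar> \<le> L"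
  shows "\<bar>(\<integral>p. g ((F ^^ k) (fst p, 0)) \<partial>\<mu>) - (\<integral>p. g p \<partial>\<mu>)\<bar> \<le> L * c ^ k"
proof -
  interpret prob_space \<mu> by (rule prob_space_\<mu>)
  have g_meas: "g \<in> borel_measurable \<mu>" by (rule is_lip_with_borel_measurable_\<mu>[OF g(1)])
  have "\<bar>(\<integral>p. g ((F ^^ k) p) \<partial>\<mu>) - (\<integral>p. g ((F ^^ k) (fst p, 0)) \<partial>\<mu>)\<bar> \<le> L * c ^ k"
  proof (rule abs_integral_diff_le)
    show "integrable \<mu> (\<lambda>p. g ((F ^^ k) p))"
      using funpow_F_measurable g_meas g(2) funpow_F_in_Sq
      by (intro integrable_bounded[where B = L]) auto
    show "integrable \<mu> (\<lambda>p. g ((F ^^ k) (fst p, 0)))"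
      using measurable_comp[OF fst_measurable base_point_observable(1)[OF g]] base_point_observable(2)[OF g]
      by (intro integrable_bounded[where B = L]) (auto simp: comp_def Sq_def)
  qed (use base_point_approx[OF g(1)] space_\<mu> in auto)
  then show ?thesis using integral_funpow_F[OF g_meas] by (simp add: abs_minus_commute)
qed

lemma integral_mult_base_point_approx:
  assumes g: "is_lip_with L g" "\<forall>p\<in>Sq. \<bar>g p\<bar> \<le> L"
    and f: "f \<in> borel_measurable \<mu>" "\<forall>p\<in>Sq. 0 \<le> f p" "\<forall>p\<in>Sq. \<bar>f p\<bar> \<le> S"
  shows "\<bar>(\<integral>p. g ((F ^^ (k + m)) p) * f p \<partial>\<mu>) - (\<integral>p. g ((F ^^ k) ((T ^^ m) (fst p), 0)) * f p \<partial>\<mu>)\<bar>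
           \<le> L * c ^ k * S"
proof (rule prob_space.abs_integral_diff_le[OF prob_space_\<mu>])
  have "0 \<le> L" by (rule is_lip_with_nonneg[OF g(1)])
  show "integrable \<mu> (\<lambda>p. g ((F ^^ (k + m)) p) * f p)"
    using funpow_F_measurable is_lip_with_borel_measurable_\<mu>[OF g(1)] f g(2) funpow_F_in_Sq \<open>0 \<le> L\<close>
    by (intro integrable_bounded[where B = "L * S"]) (auto simp: abs_mult intro!: mult_mono)
  show "integrable \<mu> (\<lambda>p. g ((F ^^ k) ((T ^^ m) (fst p), 0)) * f p)"
    using measurable_comp[OF fst_measurable comp_funpow_T_measurable[OF base_point_observable(1)[OF g]]]
      base_point_observable(2)[OF g] f \<open>0 \<le> L\<close> funpow_T_in_Iv
    by (intro integrable_bounded[where B = "L * S"]) (auto simp: comp_def abs_mult Sq_def intro!: mult_mono)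
  fix p assume "p \<in> space \<mu>"
  then have p: "p \<in> Sq" by (simp add: space_\<mu>)
  have "\<bar>g ((F ^^ (k + m)) p) - g ((F ^^ k) ((T ^^ m) (fst p), 0))\<bar> \<le> L * c ^ k"
    using base_point_approx[OF g(1) funpow_F_in_Sq[OF p, of m]] fst_funpow_F[OF p, of m]
    by (simp add: funpow_add)
  then show "\<bar>g ((F ^^ (k + m)) p) * f p - g ((F ^^ k) ((T ^^ m) (fst p), 0)) * f p\<bar> \<le> L * c ^ k * S"
    using f(2,3) p \<open>0 \<le> L\<close> c_pos
    by (auto simp: left_diff_distrib[symmetric] abs_mult intro!: mult_mono)
qed

lemma correlation_estimate:
  fixes g f :: "real \<times> real \<Rightarrow> real"
  assumes g: "is_lip_with L g" "\<forall>p\<in>Sq. \<bar>g p\<bar> \<le> L"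
    and f: "is_lip_with l f" "\<forall>p\<in>Sq. 0 \<le> f p" "\<forall>p\<in>Sq. \<bar>f p\<bar> \<le> S"
  shows "\<bar>correlation g f (k + m)\<bar> \<le> 2 * L * c ^ k * S + C * L * (S + 2 * K * l) * exp (- lam * real m)"
proof -
  interpret prob_space \<mu> by (rule prob_space_\<mu>)
  define h where "h x = g ((F ^^ k) (x, 0))" for x
  define If where "If = (\<integral>p. f p \<partial>\<mu>)"
  have f_int: "integrable \<mu> f"
    using is_lip_with_borel_measurable_\<mu>[OF f(1)] f(3) by (rule integrable_bounded)
  have "0 \<le> If" "If \<le> S"
    using f(2) space_\<mu> abs_integral_diff_le[OF f_int integrable_zero, of S] f(3)
    by (auto simp: If_def intro!: integral_nonneg_AE)
  have "\<bar>(\<integral>p. g ((F ^^ (k + m)) p) * f p \<partial>\<mu>) - (\<integral>p. h ((T ^^ m) (fst p)) * f p \<partial>\<mu>)\<bar> \<le> L * c ^ k * S"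
    unfolding h_def using integral_mult_base_point_approx[OF g is_lip_with_borel_measurable_\<mu>[OF f(1)] f(2,3)] .
  moreover have "\<bar>(\<integral>p. h ((T ^^ m) (fst p)) * f p \<partial>\<mu>) - (\<integral>p. h (fst p) \<partial>\<mu>) * If\<bar>
      \<le> C * L * (S + 2 * K * l) * exp (- lam * real m)"
    unfolding h_def If_def using base_point_observable[OF g] f by (rule decay_fst_observable)
  moreover have "\<bar>If * (\<integral>p. h (fst p) \<partial>\<mu>) - If * (\<integral>p. g p \<partial>\<mu>)\<bar> \<le> S * (L * c ^ k)"
    using integral_base_point_approx[OF g, of k] \<open>0 \<le> If\<close> \<open>If \<le> S\<close>
    by (simp add: h_def right_diff_distrib[symmetric] abs_mult mult_mono)
  ultimately show ?thesis
    unfolding correlation_def If_def[symmetric] by (simp add: abs_le_iff algebra_simps)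
qed

definition decay_rate :: real where
  "decay_rate = min (lam / 2) (- ln c / 2)"

definition decay_const :: real where
  "decay_const = 2 / c + C * (1 + 2 * K)"

lemma decay_rate_pos: "0 < decay_rate"
  using lam_pos c_pos c_less_1 by (simp add: decay_rate_def)

lemma decay_const_pos: "0 < decay_const"
  using c_pos C_pos K_nonneg by (simp add: decay_const_def add_pos_nonneg)

lemma exponential_decay:
  assumes g: "is_lip g" and f: "is_lip f" "\<forall>p\<in>Sq. 0 \<le> f p"
  shows "\<bar>correlation g f n\<bar> \<le> decay_const * lipconst g * lipnorm f * exp (- decay_rate * real n)"
proof -
  define L where "L = lipconst g"
  define l where "l = lipconst f"
  define S where "S = (SUP p\<in>Sq. \<bar>f p\<bar>)"
  \<comment> \<open>Subtracting g(0,0) leaves the correlation unchanged and bounds the observable by L(g),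
     which is what the L1 norm charged by the decay of T must be compared with.\<close>
  define g0 where "g0 p = g p - g (0, 0)" for p
  have L: "is_lip_with L g" "0 \<le> L"
    unfolding L_def using is_lip_with_lipconst[OF g] is_lip_with_nonneg by blast+
  have l: "is_lip_with l f" "0 \<le> l"
    unfolding l_def using is_lip_with_lipconst[OF f(1)] is_lip_with_nonneg by blast+
  have S: "\<forall>p\<in>Sq. \<bar>f p\<bar> \<le> S"
    unfolding S_def using is_lip_with_abs_le_SUP[OF l(1)] by blast
  have "(0, 0) \<in> Sq" by (simp add: Sq_def Iv_def)
  then have "0 \<le> S" using S by (meson abs_ge_zero order_trans)
  have g0: "is_lip_with L g0" "\<forall>p\<in>Sq. \<bar>g0 p\<bar> \<le> L"
    using L(1) is_lip_with_abs_diff_le[OF L(1) _ \<open>(0, 0) \<in> Sq\<close>] by (simp_all add: is_lip_with_def g0_def)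
  have "correlation g f n = correlation (\<lambda>p. g0 p + g (0, 0)) f n"
    by (simp add: g0_def)
  also have "\<dots> = correlation g0 f n"
    using is_lip_with_borel_measurable_\<mu> g0 l(1) S funpow_F_measurable funpow_F_in_Sq L(2)
    by (intro correlation_add_const integrable_bounded[where B = S] integrable_bounded[where B = L]
        integrable_bounded[where B = "L * S"]) (auto simp: abs_mult intro!: mult_mono)
  finally have "\<bar>correlation g f n\<bar> \<le> 2 * L * c ^ (n div 2) * S
      + C * L * (S + 2 * K * l) * exp (- lam * real (n - n div 2))"
    using correlation_estimate[OF g0 l(1) f(2) S, of "n div 2" "n - n div 2"] by simp
  also have "\<dots> \<le> decay_const * L * (S + l) * exp (- decay_rate * real n)"
    unfolding decay_const_def
    using c_pos c_less_1 C_pos lam_pos K_nonneg L(2) \<open>0 \<le> S\<close> l(2)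
    by (intro two_scale_exp_bound) (auto simp: decay_rate_def)
  finally show ?thesis by (simp add: L_def l_def S_def lipnorm_def)
qed

end

theorem theorem4p7:
  fixes F :: "real \<times> real \<Rightarrow> real \<times> real"
    and T :: "real \<Rightarrow> real"
    and G :: "real \<Rightarrow> real \<Rightarrow> real"
    and \<mu> :: "(real \<times> real) measure"
  assumes mu_sets: "sets \<mu> = sets (restrict_space borel Sq)"
    and mu_prob: "prob_space \<mu>"
    and F_meas: "F \<in> measurable \<mu> \<mu>"
    and F_inv: "distr \<mu> \<mu> F = \<mu>"
    and F_form: "\<forall>x\<in>Iv. \<forall>y\<in>Iv. F (x, y) = (T x, G x y)"
    and H1: "\<exists>C>0. \<exists>lam>0. \<forall>g f n. integrable mI g \<longrightarrow> is_BV f \<longrightarrow>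
              \<bar>(\<integral>x. g ((T ^^ n) x) * f x \<partial>mI)
                 - (\<integral>x. g x \<partial>(distr \<mu> (restrict_space borel Iv) fst)) * (\<integral>x. f x \<partial>mI)\<bar>
              \<le> C * (\<integral>x. \<bar>g x\<bar> \<partial>mI) * BVnorm f * exp (- lam * real n)"
    and H1_fin: "\<forall>x\<in>Iv. finite {z \<in> Iv. T z = x}"
    and H2: "\<exists>lam0<1. \<forall>x\<in>Iv. \<forall>y1\<in>Iv. \<forall>y2\<in>Iv. \<bar>G x y1 - G x y2\<bar> \<le> lam0 * \<bar>y1 - y2\<bar>"
    and H3: "\<exists>K. \<forall>l f. is_lip_with l f \<longrightarrow>
              (\<exists>fb. is_BV fb \<and> totvar fb \<le> K * l \<and> integrable mI fb \<and>
                 (\<forall>A \<in> sets (restrict_space borel Iv).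
                    (\<integral>p. indicator (fst -` A) p * f p \<partial>\<mu>) = (\<integral>x. indicator A x * fb x \<partial>mI)))"
  shows "\<exists>C'>0. \<exists>\<rho>>0. \<forall>g f n. is_lip g \<longrightarrow> is_lip f \<longrightarrow> (\<forall>p\<in>Sq. 0 \<le> f p) \<longrightarrow>
           \<bar>(\<integral>p. g ((F ^^ n) p) * f p \<partial>\<mu>) - (\<integral>p. f p \<partial>\<mu>) * (\<integral>p. g p \<partial>\<mu>)\<bar>
           \<le> C' * lipconst g * lipnorm f * exp (- \<rho> * real n)"
proof -
  have "skew_product F T G \<mu>" using mu_sets mu_prob F_meas F_inv F_form by (rule skew_product.intro)
  then interpret skew_product F T G \<mu> .
  obtain C lam where "0 < C" "0 < lam" "base_decay C lam"
    using H1[folded base_decay_def] by blast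
  obtain lam0 where "lam0 < 1" "fibre_lipschitz lam0"
    using H2[folded fibre_lipschitz_def] by blast
  obtain K where "marginal_BV_bound K"
    using H3[folded marginal_BV_bound_def] by blast
  \<comment> \<open>The contraction rate is raised to at least 1/2 so that its logarithm enters the rate
     finitely.\<close>
  interpret skew_product_decay F T G \<mu> "max lam0 (1/2)" C lam "max K 0"
    using \<open>skew_product F T G \<mu>\<close> \<open>0 < C\<close> \<open>0 < lam\<close> \<open>lam0 < 1\<close> \<open>base_decay C lam\<close>
      fibre_lipschitz_mono[OF \<open>fibre_lipschitz lam0\<close>] marginal_BV_bound_mono[OF \<open>marginal_BV_bound K\<close>]
    by (intro skew_product_decay.intro skew_product_decay_axioms.intro) auto
  show ?thesis
    using decay_const_pos decay_rate_pos exponential_decay unfolding correlation_def by blast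
qed

end
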